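(* Let $S$ be a set of $9$ points of $PG(3,2)$ which is a strong blocking set, i.e. for every plane $\sigma$ of $PG(3,2)$ the points of $\sigma\cap S$ span $\sigma$. Then through each point $P\in S$ there pass exactly $2$ lines of $PG(3,2)$ entirely contained in $S$.
   Context: $PG(3,2)$ is the $3$-dimensional projective space over $\mathbb{F}_2$ (15 points, each line has 3 points, each plane has 7 points). A strong blocking set in $PG(3,2)$ is a set of points $S$ such that for every plane $\sigma$, the span $\langle \sigma\cap S\rangle$ equals $\sigma$. A strong blocking set of size $9$ (the minimum possible size) is called a minimal strong blocking set. *)

theory Defs
  imports Main
begin

text \<open>PG(3,2): points are the nonzero vectors of the vector space F_2^4,
  represented as 4-tuples of booleans (False = 0, True = 1, addition = xor).\<close>

type_synonym vec = "bool \<times> bool \<times> bool \<times> bool"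

fun vadd :: "vec \<Rightarrow> vec \<Rightarrow> vec" where
  "vadd (a, b, c, d) (e, f, g, h) = (a \<noteq> e, b \<noteq> f, c \<noteq> g, d \<noteq> h)"

definition vzero :: vec where
  "vzero = (False, False, False, False)"

fun vdot :: "vec \<Rightarrow> vec \<Rightarrow> bool" where
  "vdot (a, b, c, d) (e, f, g, h) =
     (((a \<and> e) \<noteq> (b \<and> f)) \<noteq> ((c \<and> g) \<noteq> (d \<and> h)))"

definition pg_points :: "vec set" where
  "pg_points = UNIV - {vzero}"

definition is_line :: "vec set \<Rightarrow> bool" where
  "is_line L \<longleftrightarrow> (\<exists>a b. a \<noteq> vzero \<and> b \<noteq> vzero \<and> a \<noteq> b \<and> L = {a, b, vadd a b})"

text \<open>Planes: the nonzero vectors of a 3-dimensional subspace, i.e. the kernel of a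
  nonzero linear form.\<close>
definition is_plane :: "vec set \<Rightarrow> bool" where
  "is_plane \<sigma> \<longleftrightarrow> (\<exists>u. u \<noteq> vzero \<and> \<sigma> = {p. p \<noteq> vzero \<and> \<not> vdot u p})"

inductive_set lspan :: "vec set \<Rightarrow> vec set" for X :: "vec set" where
  zero: "vzero \<in> lspan X"
| base: "x \<in> X \<Longrightarrow> x \<in> lspan X"
| add: "x \<in> lspan X \<Longrightarrow> y \<in> lspan X \<Longrightarrow> vadd x y \<in> lspan X"

definition pspan :: "vec set \<Rightarrow> vec set" where
  "pspan X = lspan X - {vzero}"

definition strong_blocking_set :: "vec set \<Rightarrow> bool" where
  "strong_blocking_set S \<longleftrightarrow> S \<subseteq> pg_points \<and>
     (\<forall>\<sigma>. is_plane \<sigma> \<longrightarrow> pspan (\<sigma> \<inter> S) = \<sigma>)"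

end

theory Submission
  imports Defs
begin

text \<open>Let \<open>T\<close> be the complement of \<open>S\<close>, six points. \<open>T\<close> is a Sidon set: if
  \<open>a + b = c + d\<close> for four distinct points of \<open>T\<close>, the plane through \<open>a, b, c\<close> also contains
  \<open>d\<close>, so it meets \<open>S\<close> only inside the line \<open>{a + b, a + c, b + c}\<close> and is not spanned.
  Hence the 15 pairs of points of \<open>T\<close> have 15 distinct nonzero sums, and every point \<open>P\<close> is
  the sum of exactly one pair: \<open>T \<inter> (P + T)\<close> has two elements and \<open>T \<union> (P + T)\<close> ten.
  Of the 14 points \<open>x \<noteq> P\<close>, the four outside \<open>T \<union> (P + T)\<close> are exactly those with
  \<open>x, P + x \<in> S\<close>, and they pair up into the two lines through \<open>P\<close> inside \<open>S\<close>.\<close>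

interpretation vadd: comm_monoid vadd vzero
  by unfold_locales (auto simp: vzero_def)

lemmas vadd_ac = vadd.assoc vadd.commute vadd.left_commute

lemma vadd_self [simp]: "vadd x x = vzero"
  by (cases x) (simp add: vzero_def)

lemma vadd_self_left [simp]: "vadd x (vadd x y) = y"
  by (simp flip: vadd.assoc)

lemma vadd_eq_iff: "vadd x y = z \<longleftrightarrow> y = vadd x z"
  by auto

lemma vadd_eq_vzero_iff [simp]: "vadd x y = vzero \<longleftrightarrow> x = y" "vzero = vadd x y \<longleftrightarrow> x = y"
  by (metis vadd_eq_iff vadd.comm_neutral)+

lemma vadd_left_cancel [simp]: "vadd x y = vadd x z \<longleftrightarrow> y = z"
  by (simp add: vadd_eq_iff)

lemma vadd_eq_self_iff [simp]:
  "vadd x y = x \<longleftrightarrow> y = vzero" "x = vadd x y \<longleftrightarrow> y = vzero"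
  "vadd y x = x \<longleftrightarrow> y = vzero" "x = vadd y x \<longleftrightarrow> y = vzero"
  by (metis vadd_eq_iff vadd_self vadd.commute)+

lemma vadd_right_cancel [simp]: "vadd y x = vadd z x \<longleftrightarrow> y = z"
  by (metis vadd_left_cancel vadd.commute)

lemma mem_vadd_image_iff: "x \<in> vadd a ` A \<longleftrightarrow> vadd a x \<in> A"
  by (metis image_iff vadd_eq_iff)

lemma vdot_vadd_left: "vdot (vadd u v) x \<longleftrightarrow> vdot u x \<noteq> vdot v x"
  by (cases u; cases v; cases x) auto

lemma vdot_vadd_right: "vdot u (vadd x y) \<longleftrightarrow> vdot u x \<noteq> vdot u y"
  by (cases u; cases x; cases y) auto

lemma vdot_vzero_right [simp]: "\<not> vdot u vzero"
  by (cases u) (simp add: vzero_def)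

lemma ex_vdot: "u \<noteq> vzero \<Longrightarrow> \<exists>v. vdot u v"
  by (cases u) (auto simp: vzero_def)

lemma card_UNIV_vec: "card (UNIV :: vec set) = 16"
  by (simp flip: UNIV_Times_UNIV)

lemma card_pg_points: "card pg_points = 15"
  by (simp add: pg_points_def card_UNIV_vec)

lemma ex_nonzero_orthogonal3: "\<exists>u. u \<noteq> vzero \<and> \<not> vdot u a \<and> \<not> vdot u b \<and> \<not> vdot u c"
proof -
  let ?f = "\<lambda>u. (vdot u a, vdot u b, vdot u c)"
  have "card (UNIV :: (bool \<times> bool \<times> bool) set) = 8"
    by (simp flip: UNIV_Times_UNIV)
  then have "\<not> inj ?f"
    using card_inj_on_le[of ?f UNIV UNIV] card_UNIV_vec by auto
  then obtain u v where "u \<noteq> v" "?f u = ?f v"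
    unfolding inj_def by blast
  then show ?thesis
    by (intro exI[of _ "vadd u v"]) (auto simp: vdot_vadd_left)
qed

lemma card_vdot_kernel_le:
  assumes "u \<noteq> vzero"
  shows "card {p. \<not> vdot u p} \<le> 8"
proof -
  obtain v where v: "vdot u v"
    using ex_vdot[OF assms] by blast
  let ?K = "{p. \<not> vdot u p}"
  have "card ?K \<le> card (- ?K)"
    by (rule card_inj_on_le[where f = "vadd v"]) (auto simp: inj_on_def vdot_vadd_right v)
  moreover have "card ?K + card (- ?K) = 16"
    using card_Un_disjoint[of ?K "- ?K"] by (simp add: card_UNIV_vec)
  ultimately show ?thesis
    by linarith
qed

lemma card_Un_vadd_image:
  assumes closed: "\<forall>x\<in>V. \<forall>y\<in>V. vadd x y \<in> V" and "c \<notin> V"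
  shows "card (V \<union> vadd c ` V) = 2 * card V"
proof -
  have "vadd c x \<notin> V" if "x \<in> V" for x
  proof
    assume "vadd c x \<in> V"
    then have "vadd x (vadd c x) \<in> V"
      using closed \<open>x \<in> V\<close> by blast
    then show False
      using \<open>c \<notin> V\<close> by (simp add: vadd.left_commute)
  qed
  then have "V \<inter> vadd c ` V = {}"
    by (auto simp: mem_vadd_image_iff)
  moreover have "card (vadd c ` V) = card V"
    by (simp add: card_image inj_on_def)
  ultimately show ?thesis
    by (simp add: card_Un_disjoint)
qed

lemma vdot_kernel_eq_span:
  assumes u: "u \<noteq> vzero" "\<not> vdot u a" "\<not> vdot u b" "\<not> vdot u c"
    and indep: "a \<noteq> vzero" "b \<notin> {vzero, a}" "c \<notin> {vzero, a, b, vadd a b}"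
  shows "{p. \<not> vdot u p} = {vzero, a, b, vadd a b} \<union> vadd c ` {vzero, a, b, vadd a b}"
    (is "_ = ?V \<union> _")
proof (rule card_seteq[symmetric])
  show "?V \<union> vadd c ` ?V \<subseteq> {p. \<not> vdot u p}"
    using u by (auto simp: vdot_vadd_right)
  have "card ({vzero, a} \<union> vadd b ` {vzero, a}) = 2 * card {vzero, a}"
    using indep by (intro card_Un_vadd_image) auto
  moreover have "{vzero, a} \<union> vadd b ` {vzero, a} = ?V"
    by (auto simp: vadd.commute)
  ultimately have "card ?V = 4"
    using indep by simp
  have "card (?V \<union> vadd c ` ?V) = 2 * card ?V"
    using indep by (intro card_Un_vadd_image) (auto simp: vadd_ac)
  then show "card {p. \<not> vdot u p} \<le> card (?V \<union> vadd c ` ?V)"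
    using card_vdot_kernel_le[OF u(1)] \<open>card ?V = 4\<close> by simp
qed simp

lemma lspan_subset_line:
  assumes "X \<subseteq> {x, y, vadd x y}"
  shows "lspan X \<subseteq> {vzero, x, y, vadd x y}"
proof
  fix z
  assume "z \<in> lspan X"
  then show "z \<in> {vzero, x, y, vadd x y}"
  proof (induction rule: lspan.induct)
    case (add p q)
    then show ?case
      by (elim insertE emptyE) (simp_all add: vadd_ac)
  qed (use assms in auto)
qed

lemma vadd_ne_vadd_outside_strong_blocking_set:
  assumes sb: "strong_blocking_set S"
    and out: "{a, b, c, d} \<subseteq> pg_points - S"
    and dist: "distinct [a, b, c, d]"
  shows "vadd a b \<noteq> vadd c d"
proof
  assume "vadd a b = vadd c d"
  then have "d = vadd c (vadd a b)"
    by (metis vadd_eq_iff)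
  then have d: "d = vadd a (vadd b c)"
    by (simp add: vadd_ac)
  have nz: "a \<noteq> vzero" "b \<noteq> vzero" "c \<noteq> vzero" "d \<noteq> vzero"
    using out by (auto simp: pg_points_def)
  have "c \<noteq> vadd a b"
  proof
    assume "c = vadd a b"
    with d have "d = vzero"
      by (simp add: vadd_ac)
    with nz(4) show False ..
  qed
  then have indep: "b \<notin> {vzero, a}" "c \<notin> {vzero, a, b, vadd a b}"
    using nz dist by auto
  obtain u where u: "u \<noteq> vzero" "\<not> vdot u a" "\<not> vdot u b" "\<not> vdot u c"
    using ex_nonzero_orthogonal3 by blast
  define \<sigma> where "\<sigma> = {p. p \<noteq> vzero \<and> \<not> vdot u p}"
  have "is_plane \<sigma>"
    unfolding is_plane_def \<sigma>_def using u(1) by blast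
  then have span: "pspan (\<sigma> \<inter> S) = \<sigma>"
    using sb unfolding strong_blocking_set_def by blast
  have "\<sigma> = {p. \<not> vdot u p} - {vzero}"
    unfolding \<sigma>_def by blast
  also have "\<dots> \<subseteq> {a, b, c, d, vadd a b, vadd a c, vadd b c}"
    unfolding vdot_kernel_eq_span[OF u nz(1) indep] d by (simp add: vadd_ac) blast
  finally have "\<sigma> \<inter> S \<subseteq> {vadd a b, vadd a c, vadd b c}"
    using out by blast
  moreover have "vadd (vadd a b) (vadd a c) = vadd b c"
    by (simp add: vadd_ac)
  ultimately have "lspan (\<sigma> \<inter> S) \<subseteq> {vzero, vadd a b, vadd a c, vadd b c}"
    using lspan_subset_line[of "\<sigma> \<inter> S" "vadd a b" "vadd a c"] by simp
  moreover have "a \<in> lspan (\<sigma> \<inter> S)"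
    using span u(2) nz(1) unfolding pspan_def \<sigma>_def by blast
  moreover have "a \<noteq> vadd b c"
  proof
    assume "a = vadd b c"
    then have "c = vadd a b"
      by (simp add: vadd_ac)
    with indep show False
      by simp
  qed
  ultimately show False
    using nz by auto
qed

definition sidon :: "vec set \<Rightarrow> bool" where
  "sidon T \<longleftrightarrow>
     (\<forall>a\<in>T. \<forall>b\<in>T. \<forall>c\<in>T. \<forall>d\<in>T. a \<noteq> b \<and> vadd a b = vadd c d \<longrightarrow> {a, b} = {c, d})"

lemma sidonD:
  "sidon T \<Longrightarrow> {a, b, c, d} \<subseteq> T \<Longrightarrow> a \<noteq> b \<Longrightarrow> vadd a b = vadd c d \<Longrightarrow> {a, b} = {c, d}"
  unfolding sidon_def by blast

lemma sidon_complement_of_strong_blocking_set: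
  assumes "strong_blocking_set S"
  shows "sidon (pg_points - S)"
  unfolding sidon_def
proof (intro ballI impI)
  fix a b c d
  assume out: "a \<in> pg_points - S" "b \<in> pg_points - S" "c \<in> pg_points - S" "d \<in> pg_points - S"
    and "a \<noteq> b \<and> vadd a b = vadd c d"
  then have "a \<noteq> b" and sum: "vadd a b = vadd c d"
    by auto
  show "{a, b} = {c, d}"
  proof (rule ccontr)
    assume neq: "{a, b} \<noteq> {c, d}"
    have "c \<noteq> d"
      using \<open>a \<noteq> b\<close> sum by (metis vadd_eq_vzero_iff vadd_self)
    moreover have "a \<noteq> c" "b \<noteq> d"
      using sum neq by auto
    moreover have "a \<noteq> d"
    proof
      assume "a = d"
      with sum have "b = c"
        by (metis vadd.commute vadd_left_cancel)
      with neq \<open>a = d\<close> show False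
        by (simp add: insert_commute)
    qed
    moreover have "b \<noteq> c"
    proof
      assume "b = c"
      with sum have "a = d"
        by (metis vadd.commute vadd_left_cancel)
      with neq \<open>b = c\<close> show False
        by (simp add: insert_commute)
    qed
    ultimately have "distinct [a, b, c, d]"
      using \<open>a \<noteq> b\<close> by simp
    then show False
      using vadd_ne_vadd_outside_strong_blocking_set[OF assms _ _] out sum by auto
  qed
qed

lemma card_le_mult_card_if_fibres_le:
  assumes "finite B" "f ` A \<subseteq> B" "\<forall>y\<in>B. card {x \<in> A. f x = y} \<le> k"
  shows "card A \<le> k * card B"
proof -
  have "A = (\<Union>y\<in>B. {x \<in> A. f x = y})"
    using assms(2) by blast
  then have "card A \<le> (\<Sum>y\<in>B. card {x \<in> A. f x = y})"
    using card_UN_le[OF assms(1)] by metis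
  also have "\<dots> \<le> (\<Sum>y\<in>B. k)"
    using assms(3) by (intro sum_mono) blast
  finally show ?thesis
    by (simp add: mult.commute)
qed

lemma sidon_ex_pair_sum:
  assumes "sidon T" "T \<subseteq> pg_points" "card T = 6" "P \<in> pg_points"
  shows "\<exists>x\<in>T. vadd P x \<in> T"
proof (rule ccontr)
  assume none: "\<not> (\<exists>x\<in>T. vadd P x \<in> T)"
  define A where "A = Sigma T (\<lambda>x. T - {x})"
  \<comment> \<open>30 ordered pairs, but at most two of them for each of the 14 sums available\<close>
  have "card A = 30"
    unfolding A_def using assms(3) by (simp add: card_Diff_singleton)
  have "vadd x z \<in> pg_points - {P}" if "(x, z) \<in> A" for x z
  proof -
    have "x \<in> T" "z \<in> T" "x \<noteq> z"
      using that unfolding A_def by auto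
    moreover have "vadd x z \<noteq> P"
      using none \<open>x \<in> T\<close> \<open>z \<in> T\<close> by (metis vadd_eq_iff vadd.commute)
    ultimately show ?thesis
      by (simp add: pg_points_def)
  qed
  then have image: "case_prod vadd ` A \<subseteq> pg_points - {P}"
    by (intro image_subsetI) (metis case_prod_conv surj_pair)
  have fibres: "card {q \<in> A. case_prod vadd q = y} \<le> 2" for y
  proof (cases "{q \<in> A. case_prod vadd q = y} = {}")
    case False
    then obtain a b where ab: "(a, b) \<in> A" "vadd a b = y"
      by auto
    have "{q \<in> A. case_prod vadd q = y} \<subseteq> {(a, b), (b, a)}"
    proof
      fix q
      assume q: "q \<in> {q \<in> A. case_prod vadd q = y}"
      obtain x z where xz: "q = (x, z)"
        by (cases q)
      have "{x, z} = {a, b}"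
        using q ab unfolding xz by (intro sidonD[OF \<open>sidon T\<close>]) (auto simp: A_def)
      then show "q \<in> {(a, b), (b, a)}"
        unfolding xz by (auto simp: doubleton_eq_iff)
    qed
    then have "card {q \<in> A. case_prod vadd q = y} \<le> card {(a, b), (b, a)}"
      by (intro card_mono) simp_all
    also have "\<dots> \<le> 2"
      by (rule card_insert_le_m1) simp_all
    finally show ?thesis .
  qed (simp only: card.empty le0)
  have "card A \<le> 2 * card (pg_points - {P})"
    using fibres by (intro card_le_mult_card_if_fibres_le[OF finite image]) blast
  with \<open>card A = 30\<close> show False
    using assms(4) by (simp add: card_pg_points)
qed

lemma sidon_pair_sum_unique:
  assumes "sidon T" "P \<noteq> vzero" "x \<in> T" "vadd P x \<in> T" "y \<in> T" "vadd P y \<in> T"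
  shows "y = x \<or> y = vadd P x"
proof -
  have "vadd x (vadd P x) = vadd y (vadd P y)"
    by (simp add: vadd.left_commute)
  moreover have "x \<noteq> vadd P x"
    using assms(2) by simp
  ultimately have "{x, vadd P x} = {y, vadd P y}"
    using assms by (intro sidonD) auto
  then show ?thesis
    by (metis doubleton_eq_iff)
qed

lemma card_sidon_Int_vadd_image:
  assumes "sidon T" "T \<subseteq> pg_points" "card T = 6" "P \<in> pg_points"
  shows "card (T \<inter> vadd P ` T) = 2"
proof -
  obtain x where x: "x \<in> T" "vadd P x \<in> T"
    using sidon_ex_pair_sum[OF assms] by blast
  have P: "P \<noteq> vzero"
    using assms(4) by (simp add: pg_points_def)
  have "T \<inter> vadd P ` T = {x, vadd P x}"
  proof (intro equalityI subsetI)
    fix y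
    assume "y \<in> T \<inter> vadd P ` T"
    then have "y \<in> T" "vadd P y \<in> T"
      by (simp_all add: mem_vadd_image_iff)
    then show "y \<in> {x, vadd P x}"
      using sidon_pair_sum_unique[OF assms(1) P x] by blast
  next
    fix y
    assume "y \<in> {x, vadd P x}"
    then show "y \<in> T \<inter> vadd P ` T"
      using x by (elim insertE) (simp_all add: mem_vadd_image_iff)
  qed
  then show ?thesis
    using P by simp
qed

lemma line_eq_through_points:
  assumes "is_line L" "P \<in> L" "x \<in> L" "x \<noteq> P"
  shows "L = {P, x, vadd P x}"
proof -
  obtain a b where L: "L = {a, b, vadd a b}"
    using assms(1) unfolding is_line_def by blast
  have "vadd a (vadd a b) = b" "vadd b (vadd a b) = a"
    by (simp_all add: vadd.left_commute)
  then show ?thesis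
    using assms(2-4) unfolding L by (auto simp: vadd.commute)
qed

lemma lines_through_eq_image:
  assumes "S \<subseteq> pg_points" "P \<in> S"
  shows "{L. is_line L \<and> L \<subseteq> S \<and> P \<in> L} = (\<lambda>x. {P, x, vadd P x}) ` {x \<in> S - {P}. vadd P x \<in> S}"
proof (intro equalityI subsetI)
  fix L
  assume "L \<in> {L. is_line L \<and> L \<subseteq> S \<and> P \<in> L}"
  then have L: "is_line L" "L \<subseteq> S" "P \<in> L"
    by simp_all
  then obtain a b where "a \<noteq> b" "{a, b} \<subseteq> L"
    unfolding is_line_def by blast
  then obtain x where "x \<in> L" "x \<noteq> P"
    by blast
  then have "L = {P, x, vadd P x}"
    using L by (intro line_eq_through_points)
  with \<open>x \<in> L\<close> \<open>x \<noteq> P\<close> L(2) show "L \<in> (\<lambda>x. {P, x, vadd P x}) ` {x \<in> S - {P}. vadd P x \<in> S}"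
    by blast
next
  fix L
  assume "L \<in> (\<lambda>x. {P, x, vadd P x}) ` {x \<in> S - {P}. vadd P x \<in> S}"
  then obtain x where x: "x \<in> S" "x \<noteq> P" "vadd P x \<in> S" and L: "L = {P, x, vadd P x}"
    by blast
  have "P \<noteq> vzero" "x \<noteq> vzero"
    using assms x(1) by (auto simp: pg_points_def)
  then have "is_line L"
    unfolding is_line_def L using x(2) by blast
  then show "L \<in> {L. is_line L \<and> L \<subseteq> S \<and> P \<in> L}"
    using assms(2) x unfolding L by simp
qed

lemma card_pairs_of_involution:
  assumes "finite G" "\<forall>x\<in>G. f x \<in> G \<and> f x \<noteq> x \<and> f (f x) = x"
  shows "2 * card ((\<lambda>x. {x, f x}) ` G) = card G"
proof -
  have "{x, f x} \<inter> {y, f y} = {}" if "x \<in> G" "y \<in> G" "{x, f x} \<noteq> {y, f y}" for x y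
  proof -
    have "y \<noteq> x" "f y \<noteq> x"
      using that assms(2) by (auto simp: insert_commute)
    moreover have "y \<noteq> f x" "f y \<noteq> f x"
      using calculation that assms(2) by metis+
    ultimately show ?thesis
      by auto
  qed
  then have "2 * card ((\<lambda>x. {x, f x}) ` G) = card (\<Union> ((\<lambda>x. {x, f x}) ` G))"
    using assms by (intro card_partition) auto
  also have "\<Union> ((\<lambda>x. {x, f x}) ` G) = G"
    using assms(2) by blast
  finally show ?thesis .
qed

lemma card_lines_through:
  assumes "S \<subseteq> pg_points" "P \<in> S"
  shows "2 * card {L. is_line L \<and> L \<subseteq> S \<and> P \<in> L} = card {x \<in> S - {P}. vadd P x \<in> S}"
proof -
  let ?G = "{x \<in> S - {P}. vadd P x \<in> S}"
  have nz: "P \<noteq> vzero" "\<forall>x\<in>?G. x \<noteq> vzero"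
    using assms by (auto simp: pg_points_def)
  have "{L. is_line L \<and> L \<subseteq> S \<and> P \<in> L} = insert P ` (\<lambda>x. {x, vadd P x}) ` ?G"
    unfolding lines_through_eq_image[OF assms] image_image ..
  moreover have "inj_on (insert P) ((\<lambda>x. {x, vadd P x}) ` ?G)"
    using nz by (auto simp: inj_on_def insert_ident)
  moreover have "2 * card ((\<lambda>x. {x, vadd P x}) ` ?G) = card ?G"
    using nz by (intro card_pairs_of_involution) auto
  ultimately show ?thesis
    by (simp add: card_image)
qed

lemma card_points_paired_in:
  assumes "S \<subseteq> pg_points" "P \<in> S"
  defines "T \<equiv> pg_points - S"
  shows "card {x \<in> S - {P}. vadd P x \<in> S} = 14 - card (T \<union> vadd P ` T)"
proof -
  have "T \<union> vadd P ` T \<subseteq> pg_points - {P}"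
  proof
    fix x
    assume "x \<in> T \<union> vadd P ` T"
    then have "x \<in> T \<or> vadd P x \<in> T"
      by (simp add: mem_vadd_image_iff)
    then show "x \<in> pg_points - {P}"
      using assms(2) by (auto simp: T_def pg_points_def)
  qed
  moreover have "{x \<in> S - {P}. vadd P x \<in> S} = (pg_points - {P}) - (T \<union> vadd P ` T)"
  proof (rule set_eqI)
    fix x
    have "x \<in> S \<longleftrightarrow> x \<noteq> vzero \<and> x \<notin> T" "vadd P x \<in> S \<longleftrightarrow> x \<noteq> P \<and> vadd P x \<notin> T"
      using assms(1) unfolding T_def pg_points_def by auto
    then show "x \<in> {x \<in> S - {P}. vadd P x \<in> S} \<longleftrightarrow> x \<in> (pg_points - {P}) - (T \<union> vadd P ` T)"
      by (auto simp: pg_points_def mem_vadd_image_iff)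
  qed
  moreover have "P \<in> pg_points"
    using assms(1,2) by blast
  ultimately show ?thesis
    by (simp add: card_Diff_subset card_pg_points)
qed

theorem lemma2p2:
  fixes S :: "vec set"
  assumes "S \<subseteq> pg_points"
    and "card S = 9"
    and "strong_blocking_set S"
    and "P \<in> S"
  shows "card {L. is_line L \<and> L \<subseteq> S \<and> P \<in> L} = 2"
proof -
  define T where "T = pg_points - S"
  have "sidon T"
    unfolding T_def using assms(3) by (rule sidon_complement_of_strong_blocking_set)
  moreover have "T \<subseteq> pg_points"
    unfolding T_def by blast
  moreover have "card T = 6"
    unfolding T_def using assms(1,2) by (simp add: card_Diff_subset card_pg_points)
  moreover have "P \<in> pg_points"
    using assms(1,4) by blast
  ultimately have "card (T \<inter> vadd P ` T) = 2"
    by (rule card_sidon_Int_vadd_image)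
  moreover have "card (vadd P ` T) = 6"
    using \<open>card T = 6\<close> by (simp add: card_image inj_on_def)
  ultimately have "card (T \<union> vadd P ` T) = 10"
    using card_Un_Int[of T "vadd P ` T"] \<open>card T = 6\<close> by simp
  then have "card {x \<in> S - {P}. vadd P x \<in> S} = 4"
    using card_points_paired_in[OF assms(1,4)] unfolding T_def by simp
  then show ?thesis
    using card_lines_through[OF assms(1,4)] by simp
qed

end
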